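(* Let $D$ be a distance on $\mathcal D(\mathcal H)$ that is convex in each argument and contractive. Let $\rho$ be a state and let $\sigma^*$ be a separable state with $D(\rho,\sigma^* )=E_D(\rho)$. Then for every $p\in[0,1]$, $$E_D\big((1-p)\rho+p\sigma^*\big)=(1-p)E_D(\rho).$$
   Context: $\mathcal H$ is a finite-dimensional multipartite Hilbert space, $\mathcal D(\mathcal H)$ its density matrices, $\mathcal S\subseteq\mathcal D(\mathcal H)$ the separable states (convex combinations of product states). A distance $D$ is a metric on density matrices; convex in each argument means $D(p\rho_1+(1-p)\rho_2,\sigma)\le pD(\rho_1,\sigma)+(1-p)D(\rho_2,\sigma)$; contractive means $D(\Lambda[\rho],\Lambda[\sigma])\le D(\rho,\sigma)$ for every CPT map $\Lambda$. The distance-based entanglement measure is $E_D(\rho)=\inf_{\sigma\in\mathcal S}D(\rho,\sigma)$. *)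

theory Defs
  imports Complex_Main "Jordan_Normal_Form.Matrix"
begin

definition mtrace :: "complex mat \<Rightarrow> complex" where
  "mtrace A = (\<Sum>i<dim_row A. A $$ (i, i))"

definition adjoint :: "complex mat \<Rightarrow> complex mat" where
  "adjoint A = mat (dim_col A) (dim_row A) (\<lambda>(i, j). cnj (A $$ (j, i)))"

definition psd :: "nat \<Rightarrow> complex mat \<Rightarrow> bool" where
  "psd n A \<longleftrightarrow> A \<in> carrier_mat n n \<and> adjoint A = A \<and>
     (\<forall>v \<in> carrier_vec n. 0 \<le> Re (map_vec cnj v \<bullet> (A *\<^sub>v v)))"

definition density :: "nat \<Rightarrow> complex mat set" where
  "density n = {A. psd n A \<and> mtrace A = 1}"

definition kron :: "complex mat \<Rightarrow> complex mat \<Rightarrow> complex mat" where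
  "kron A B = mat (dim_row A * dim_row B) (dim_col A * dim_col B)
     (\<lambda>(i, j). A $$ (i div dim_row B, j div dim_col B) * B $$ (i mod dim_row B, j mod dim_col B))"

text \<open>Multipartite Hilbert space H = H_1 (x) ... (x) H_k, given by the list ds of local dimensions.\<close>
definition tdim :: "nat list \<Rightarrow> nat" where
  "tdim ds = prod_list ds"

definition product_states :: "nat list \<Rightarrow> complex mat set" where
  "product_states ds = {foldr kron rs (1\<^sub>m 1) | rs.
      length rs = length ds \<and> (\<forall>i < length ds. rs ! i \<in> density (ds ! i))}"

definition separable_states :: "nat list \<Rightarrow> complex mat set" where
  "separable_states ds = {mat (tdim ds) (tdim ds) (\<lambda>(i, j). \<Sum>l<k. complex_of_real (ps l) * (ss l) $$ (i, j))
      | (k::nat) ps ss. (\<forall>l<k. 0 \<le> ps l \<and> ss l \<in> product_states ds) \<and> (\<Sum>l<k. ps l) = 1}"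

definition mix :: "real \<Rightarrow> complex mat \<Rightarrow> complex mat \<Rightarrow> complex mat" where
  "mix p A B = complex_of_real p \<cdot>\<^sub>m A + complex_of_real (1 - p) \<cdot>\<^sub>m B"

definition metric_on_density :: "nat \<Rightarrow> (complex mat \<Rightarrow> complex mat \<Rightarrow> real) \<Rightarrow> bool" where
  "metric_on_density n D \<longleftrightarrow>
     (\<forall>x \<in> density n. \<forall>y \<in> density n. (D x y = 0 \<longleftrightarrow> x = y) \<and> D x y = D y x) \<and>
     (\<forall>x \<in> density n. \<forall>y \<in> density n. \<forall>z \<in> density n. D x z \<le> D x y + D y z)"

definition convex_each_arg :: "nat \<Rightarrow> (complex mat \<Rightarrow> complex mat \<Rightarrow> real) \<Rightarrow> bool" where
  "convex_each_arg n D \<longleftrightarrow>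
     (\<forall>p \<in> {0..1}. \<forall>r1 \<in> density n. \<forall>r2 \<in> density n. \<forall>s \<in> density n.
        D (mix p r1 r2) s \<le> p * D r1 s + (1 - p) * D r2 s \<and>
        D s (mix p r1 r2) \<le> p * D s r1 + (1 - p) * D s r2)"

definition blk :: "nat \<Rightarrow> nat \<Rightarrow> nat \<Rightarrow> complex mat \<Rightarrow> complex mat" where
  "blk n a b X = mat n n (\<lambda>(i, j). X $$ (a * n + i, b * n + j))"

text \<open>(id_m (x) L) applied to an (m*n) x (m*n) matrix.\<close>
definition id_tensor :: "nat \<Rightarrow> nat \<Rightarrow> (complex mat \<Rightarrow> complex mat) \<Rightarrow> complex mat \<Rightarrow> complex mat" where
  "id_tensor m n L X = mat (m * n) (m * n) (\<lambda>(i, j). L (blk n (i div n) (j div n) X) $$ (i mod n, j mod n))"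

definition CPT_map :: "nat \<Rightarrow> (complex mat \<Rightarrow> complex mat) \<Rightarrow> bool" where
  "CPT_map n L \<longleftrightarrow>
     (\<forall>A \<in> carrier_mat n n. L A \<in> carrier_mat n n) \<and>
     (\<forall>A \<in> carrier_mat n n. \<forall>B \<in> carrier_mat n n. L (A + B) = L A + L B) \<and>
     (\<forall>c. \<forall>A \<in> carrier_mat n n. L (c \<cdot>\<^sub>m A) = c \<cdot>\<^sub>m L A) \<and>
     (\<forall>A \<in> carrier_mat n n. mtrace (L A) = mtrace A) \<and>
     (\<forall>m. \<forall>X. psd (m * n) X \<longrightarrow> psd (m * n) (id_tensor m n L X))"

definition contractive :: "nat \<Rightarrow> (complex mat \<Rightarrow> complex mat \<Rightarrow> real) \<Rightarrow> bool" where
  "contractive n D \<longleftrightarrow>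
     (\<forall>L. CPT_map n L \<longrightarrow> (\<forall>r \<in> density n. \<forall>s \<in> density n. D (L r) (L s) \<le> D r s))"

definition E_D :: "nat list \<Rightarrow> (complex mat \<Rightarrow> complex mat \<Rightarrow> real) \<Rightarrow> complex mat \<Rightarrow> real" where
  "E_D ds D r = Inf ((\<lambda>s. D r s) ` separable_states ds)"

end

theory Submission
  imports Defs
begin

(* The proof has an analytic and an algebraic half.
   The analytic half (lemma inf_distance_on_segment) works for an arbitrary set S of density
   matrices in place of the separable states: convexity gives D(tau, sigma) <= (1-p) D(rho, sigma),
   which is the upper bound, and the triangle inequality through tau together with
   D(rho, tau) <= p D(rho, sigma) gives the lower bound.
   The algebraic half justifies applying it to S = separable states, i.e. shows that separable
   states are density matrices.  The crux is that a Kronecker product of positive semidefinite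
   matrices is positive semidefinite; it is proved for matrices viewed as functions
   nat => nat => complex by induction on the size of the first factor, splitting off its last
   row and column by a Schur complement.  Convexity of the density matrices then handles the
   mixtures defining separable states and the mixture tau itself. *)

section \<open>Positive semidefinite matrices as functions\<close>

definition sesq :: "nat \<Rightarrow> (nat \<Rightarrow> nat \<Rightarrow> complex) \<Rightarrow> (nat \<Rightarrow> complex) \<Rightarrow> (nat \<Rightarrow> complex) \<Rightarrow> complex" where
  "sesq n B x y = (\<Sum>k<n. \<Sum>l<n. cnj (x k) * B k l * y l)"

definition hermitian :: "nat \<Rightarrow> (nat \<Rightarrow> nat \<Rightarrow> complex) \<Rightarrow> bool" where
  "hermitian n A \<longleftrightarrow> (\<forall>a<n. \<forall>b<n. cnj (A a b) = A b a)"

definition psd_fn :: "nat \<Rightarrow> (nat \<Rightarrow> nat \<Rightarrow> complex) \<Rightarrow> bool" where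
  "psd_fn n A \<longleftrightarrow> hermitian n A \<and> (\<forall>v. 0 \<le> Re (sesq n A v v))"

abbreviation entries :: "complex mat \<Rightarrow> nat \<Rightarrow> nat \<Rightarrow> complex" where
  "entries A \<equiv> \<lambda>i j. A $$ (i, j)"

lemma quadratic_form_sesq:
  assumes "A \<in> carrier_mat n n" "v \<in> carrier_vec n"
  shows "map_vec cnj v \<bullet> (A *\<^sub>v v) = sesq n (entries A) (\<lambda>i. v $ i) (\<lambda>i. v $ i)"
  using assms unfolding sesq_def scalar_prod_def
  by (auto simp: scalar_prod_def atLeast0LessThan sum_distrib_left mult.assoc intro!: sum.cong)

lemma adjoint_eq_iff_hermitian:
  assumes "A \<in> carrier_mat n n"
  shows "adjoint A = A \<longleftrightarrow> hermitian n (entries A)"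
proof
  assume "adjoint A = A"
  then have "\<forall>i<n. \<forall>j<n. adjoint A $$ (i,j) = A $$ (i,j)" by simp
  then show "hermitian n (entries A)" using assms unfolding hermitian_def adjoint_def
    by (metis (no_types, lifting) carrier_matD case_prod_conv complex_cnj_cnj index_mat(1))
next
  assume "hermitian n (entries A)"
  then show "adjoint A = A"
    by (intro eq_matI) (use assms in \<open>auto simp: adjoint_def hermitian_def\<close>)
qed

lemma psd_iff_psd_fn: "psd n A \<longleftrightarrow> A \<in> carrier_mat n n \<and> psd_fn n (entries A)"
proof
  assume psd: "psd n A"
  then have A: "A \<in> carrier_mat n n" by (simp add: psd_def)
  have "0 \<le> Re (sesq n (entries A) v v)" for v
  proof -
    have "sesq n (entries A) v v = sesq n (entries A) (\<lambda>i. vec n v $ i) (\<lambda>i. vec n v $ i)"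
      unfolding sesq_def by (auto intro!: sum.cong)
    also have "\<dots> = map_vec cnj (vec n v) \<bullet> (A *\<^sub>v vec n v)"
      using quadratic_form_sesq[OF A, of "vec n v"] by simp
    finally show ?thesis using psd unfolding psd_def by auto
  qed
  then show "A \<in> carrier_mat n n \<and> psd_fn n (entries A)"
    using psd A adjoint_eq_iff_hermitian unfolding psd_def psd_fn_def by auto
next
  assume "A \<in> carrier_mat n n \<and> psd_fn n (entries A)"
  then show "psd n A" unfolding psd_def psd_fn_def using quadratic_form_sesq adjoint_eq_iff_hermitian by auto
qed

lemma sesq_cong: "(\<And>i. i < n \<Longrightarrow> u i = v i) \<Longrightarrow> sesq n A u u = sesq n A v v"
  unfolding sesq_def by (auto intro!: sum.cong)

lemma sesq_Suc: "sesq (Suc m) A u u = sesq m A u u + (\<Sum>i<m. cnj (u i) * A i m) * u m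
   + cnj (u m) * (\<Sum>j<m. A m j * u j) + cnj (u m) * A m m * u m"
  unfolding sesq_def by (simp add: sum.distrib sum_distrib_left sum_distrib_right algebra_simps)

lemma psd_fn_restrict: assumes "psd_fn (Suc m) A" shows "psd_fn m A"
proof -
  have "sesq m A v v = sesq (Suc m) A (v(m:=0)) (v(m:=0))" for v
    by (simp add: sesq_Suc sesq_cong[of m "v(m:=0)" v])
  then show ?thesis using assms unfolding psd_fn_def hermitian_def by auto
qed

lemma sesq_two_coords:
  assumes "a < n" "b < n" "a \<noteq> b" "\<And>i. i \<notin> {a,b} \<Longrightarrow> v i = 0"
  shows "sesq n A v v = cnj (v a) * A a a * v a + cnj (v a) * A a b * v b + cnj (v b) * A b a * v a
     + cnj (v b) * A b b * v b"
proof -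
  have ab: "{a,b} \<subseteq> {..<n}" using assms by auto
  have "sesq n A v v = (\<Sum>i\<in>{a,b}. \<Sum>j<n. cnj (v i) * A i j * v j)"
    unfolding sesq_def by (rule sum.mono_neutral_right) (use ab assms(4) in auto)
  also have "\<dots> = (\<Sum>i\<in>{a,b}. \<Sum>j\<in>{a,b}. cnj (v i) * A i j * v j)"
    by (rule sum.cong[OF refl], rule sum.mono_neutral_right) (use ab assms(4) in auto)
  finally show ?thesis using assms(3) by (simp add: algebra_simps)
qed

text \<open>A zero diagonal entry of a PSD matrix forces its whole column to vanish: otherwise a
  suitable vector on the two coordinates makes the quadratic form negative.\<close>
lemma psd_fn_zero_diag_column:
  assumes psd: "psd_fn n A" and zero: "A m m = 0" and m: "m < n" and a: "a < n"
  shows "A a m = 0"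
proof (rule ccontr)
  define c where "c = A a m"
  assume "A a m \<noteq> 0"
  then have am: "a \<noteq> m" and c_pos: "(cmod c)^2 > 0" using zero c_def by auto
  have herm: "cnj (A a m) = A m a" using psd a m unfolding psd_fn_def hermitian_def by auto
  define s where "s = (\<bar>Re (A a a)\<bar> + 1) / (2 * (cmod c)^2)"
  define v where "v = (\<lambda>i. if i = a then 1 else if i = m then - of_real s * cnj c else (0::complex))"
  have "sesq n A v v = A a a + c * (- of_real s * cnj c) + cnj (- of_real s * cnj c) * cnj c"
    using sesq_two_coords[OF a m am, of v A] zero herm unfolding v_def c_def by (simp add: am[symmetric])
  also have "\<dots> = A a a - 2 * of_real s * (c * cnj c)" by (simp add: algebra_simps)
  also have "c * cnj c = of_real ((cmod c)^2)" using complex_norm_square by auto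
  finally have "Re (sesq n A v v) = Re (A a a) - 2 * s * (cmod c)^2" by simp
  also have "\<dots> = Re (A a a) - (\<bar>Re (A a a)\<bar> + 1)" unfolding s_def using c_pos by (simp add: field_simps)
  also have "\<dots> < 0" by linarith
  finally show False using psd unfolding psd_fn_def by (meson not_le)
qed

text \<open>The Schur complement of a nonzero last diagonal entry of a PSD matrix is PSD:
  its quadratic form at \<open>v\<close> is that of the full matrix at \<open>v\<close> extended by a suitable last coordinate.\<close>
lemma psd_fn_schur_complement:
  assumes psd: "psd_fn (Suc m) A" and nz: "A m m \<noteq> 0"
  shows "psd_fn m (\<lambda>a b. A a b - A a m * A m b / A m m)"
proof -
  define \<alpha> where "\<alpha> = A m m"
  have herm: "\<And>a b. a < Suc m \<Longrightarrow> b < Suc m \<Longrightarrow> cnj (A a b) = A b a"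
    using psd unfolding psd_fn_def hermitian_def by auto
  then have \<alpha>_real: "cnj \<alpha> = \<alpha>" unfolding \<alpha>_def by auto
  have "0 \<le> Re (sesq m (\<lambda>a b. A a b - A a m * A m b / A m m) v v)" for v
  proof -
    define s where "s = (\<Sum>j<m. A m j * v j)"
    have col: "\<And>i. i < m \<Longrightarrow> A i m = cnj (A m i)" using herm by (metis complex_cnj_cnj less_SucI lessI)
    have cnj_s: "(\<Sum>i<m. cnj (v i) * A i m) = cnj s"
      unfolding s_def cnj_sum by (rule sum.cong[OF refl]) (simp add: col)
    define u where "u = v(m := - s / \<alpha>)"
    have "sesq (Suc m) A u u = sesq m A v v + cnj s * (- s / \<alpha>) + cnj (- s / \<alpha>) * s
        + cnj (- s / \<alpha>) * \<alpha> * (- s / \<alpha>)"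
    proof -
      have "sesq m A u u = sesq m A v v" by (rule sesq_cong) (simp add: u_def)
      moreover have "(\<Sum>j<m. A m j * u j) = s" unfolding s_def u_def by (auto intro!: sum.cong)
      moreover have "(\<Sum>i<m. cnj (u i) * A i m) = cnj s" using cnj_s unfolding u_def by (auto intro!: sum.cong)
      ultimately show ?thesis unfolding sesq_Suc by (simp add: u_def \<alpha>_def)
    qed
    also have "\<dots> = sesq m A v v - cnj s * s / \<alpha>"
      using \<alpha>_real nz unfolding \<alpha>_def by (simp add: field_simps)
    also have "\<dots> = sesq m (\<lambda>a b. A a b - A a m * A m b / A m m) v v"
    proof -
      have "sesq m (\<lambda>a b. A a b - A a m * A m b / A m m) v v
          = sesq m A v v - (\<Sum>i<m. \<Sum>j<m. cnj (v i) * A i m * (A m j * v j)) / \<alpha>"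
        unfolding sesq_def \<alpha>_def by (simp add: sum_subtractf sum_divide_distrib algebra_simps diff_divide_distrib)
      also have "(\<Sum>i<m. \<Sum>j<m. cnj (v i) * A i m * (A m j * v j)) = cnj s * s"
        using cnj_s unfolding s_def by (simp only: sum_product[symmetric])
      finally show ?thesis by simp
    qed
    finally show ?thesis using psd unfolding psd_fn_def by metis
  qed
  moreover have "hermitian m (\<lambda>a b. A a b - A a m * A m b / A m m)"
    unfolding hermitian_def using herm \<alpha>_real unfolding \<alpha>_def by auto
  ultimately show ?thesis unfolding psd_fn_def by auto
qed

lemma sum_swap_outer_pairs:
  "(\<Sum>k\<in>K. \<Sum>l\<in>L. \<Sum>a\<in>A. \<Sum>b\<in>B. f k l a b) = (\<Sum>a\<in>A. \<Sum>b\<in>B. \<Sum>k\<in>K. \<Sum>l\<in>L. (f k l a b :: 'c::comm_monoid_add))"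
proof -
  have "(\<Sum>k\<in>K. \<Sum>l\<in>L. \<Sum>a\<in>A. \<Sum>b\<in>B. f k l a b) = (\<Sum>k\<in>K. \<Sum>a\<in>A. \<Sum>l\<in>L. \<Sum>b\<in>B. f k l a b)"
    by (rule sum.cong[OF refl], rule sum.swap)
  also have "\<dots> = (\<Sum>a\<in>A. \<Sum>k\<in>K. \<Sum>l\<in>L. \<Sum>b\<in>B. f k l a b)" by (rule sum.swap)
  also have "\<dots> = (\<Sum>a\<in>A. \<Sum>k\<in>K. \<Sum>b\<in>B. \<Sum>l\<in>L. f k l a b)"
    by (rule sum.cong[OF refl], rule sum.cong[OF refl], rule sum.swap)
  also have "\<dots> = (\<Sum>a\<in>A. \<Sum>b\<in>B. \<Sum>k\<in>K. \<Sum>l\<in>L. f k l a b)"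
    by (rule sum.cong[OF refl], rule sum.swap)
  finally show ?thesis .
qed

lemma sesq_linear_combination: "sesq n B (\<lambda>l. \<Sum>a<M. c a * w a l) (\<lambda>l. \<Sum>b<M. d b * w b l)
   = (\<Sum>a<M. \<Sum>b<M. cnj (c a) * d b * sesq n B (w a) (w b))"
proof -
  have "sesq n B (\<lambda>l. \<Sum>a<M. c a * w a l) (\<lambda>l. \<Sum>b<M. d b * w b l)
     = (\<Sum>k<n. \<Sum>l<n. \<Sum>a<M. \<Sum>b<M. cnj (c a) * d b * (cnj (w a k) * B k l * w b l))"
    unfolding sesq_def cnj_sum by (simp add: sum_distrib_left sum_distrib_right mult_ac)
  also have "\<dots> = (\<Sum>a<M. \<Sum>b<M. \<Sum>k<n. \<Sum>l<n. cnj (c a) * d b * (cnj (w a k) * B k l * w b l))"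
    by (rule sum_swap_outer_pairs)
  also have "\<dots> = (\<Sum>a<M. \<Sum>b<M. cnj (c a) * d b * sesq n B (w a) (w b))"
    unfolding sesq_def by (simp add: sum_distrib_left)
  finally show ?thesis .
qed

text \<open>Induction on the size of \<open>A\<close>: a zero last
  diagonal entry kills the last row and column; otherwise \<open>A\<close> is its Schur complement plus the
  rank-one term \<open>A\<^sub>a\<^sub>m A\<^sub>m\<^sub>b / A\<^sub>m\<^sub>m\<close>, which contributes \<open>\<langle>u, B u\<rangle> / A\<^sub>m\<^sub>m \<ge> 0\<close>.\<close>
lemma psd_fn_gram_sum_nonneg:
  assumes "psd_fn m A" "psd_fn n B"
  shows "0 \<le> Re (\<Sum>a<m. \<Sum>b<m. A a b * sesq n B (w a) (w b))"
  using assms(1)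
proof (induction m arbitrary: A)
  case 0
  then show ?case by simp
next
  case (Suc m)
  have herm: "\<And>a b. a < Suc m \<Longrightarrow> b < Suc m \<Longrightarrow> cnj (A a b) = A b a"
    using Suc.prems unfolding psd_fn_def hermitian_def by auto
  show ?case
  proof (cases "A m m = 0")
    case True
    have col: "A a m = 0" if "a < Suc m" for a using psd_fn_zero_diag_column[OF Suc.prems True _ that] by simp
    have row: "A m a = 0" if "a < Suc m" for a using herm[OF that, of m] col[OF that] by simp
    have "(\<Sum>a<Suc m. \<Sum>b<Suc m. A a b * sesq n B (w a) (w b)) = (\<Sum>a<m. \<Sum>b<m. A a b * sesq n B (w a) (w b))"
      using col row by simp
    then show ?thesis using Suc.IH[OF psd_fn_restrict[OF Suc.prems]] by simp
  next
    case False
    define \<alpha> where "\<alpha> = A m m"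
    define A' where "A' = (\<lambda>a b. A a b - A a m * A m b / A m m)"
    define u where "u = (\<lambda>l. \<Sum>a<Suc m. A m a * w a l)"
    have \<alpha>_real: "\<alpha> = of_real (Re \<alpha>)"
      using herm \<alpha>_def by (metis Reals_cnj_iff complex_is_Real_iff lessI of_real_Re)
    have "Re \<alpha> \<ge> 0"
    proof -
      have "sesq (Suc m) A (\<lambda>i. if i = m then 1 else 0) (\<lambda>i. if i = m then 1 else 0) = \<alpha>"
        unfolding sesq_Suc \<alpha>_def by (simp add: sesq_def)
      then show ?thesis using Suc.prems unfolding psd_fn_def by metis
    qed
    then have \<alpha>_pos: "Re \<alpha> > 0" using False \<alpha>_def \<alpha>_real by (metis less_eq_real_def of_real_0)
    have "(\<Sum>a<Suc m. \<Sum>b<Suc m. A a b * sesq n B (w a) (w b))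
      = (\<Sum>a<Suc m. \<Sum>b<Suc m. A' a b * sesq n B (w a) (w b) + A a m * A m b * sesq n B (w a) (w b) / \<alpha>)"
      unfolding A'_def \<alpha>_def by (intro sum.cong refl) (simp add: algebra_simps)
    also have "\<dots> = (\<Sum>a<Suc m. \<Sum>b<Suc m. A' a b * sesq n B (w a) (w b))
        + (\<Sum>a<Suc m. \<Sum>b<Suc m. A a m * A m b * sesq n B (w a) (w b)) / \<alpha>"
      by (simp only: sum.distrib sum_divide_distrib)
    also have "(\<Sum>a<Suc m. \<Sum>b<Suc m. A' a b * sesq n B (w a) (w b)) = (\<Sum>a<m. \<Sum>b<m. A' a b * sesq n B (w a) (w b))"
      using False unfolding A'_def by simp
    also have "(\<Sum>a<Suc m. \<Sum>b<Suc m. A a m * A m b * sesq n B (w a) (w b)) = sesq n B u u"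
      unfolding u_def sesq_linear_combination using herm by (intro sum.cong refl) auto
    finally have split: "(\<Sum>a<Suc m. \<Sum>b<Suc m. A a b * sesq n B (w a) (w b))
       = (\<Sum>a<m. \<Sum>b<m. A' a b * sesq n B (w a) (w b)) + sesq n B u u / \<alpha>" .
    have "0 \<le> Re (sesq n B u u)" using assms(2) unfolding psd_fn_def by auto
    then have "0 \<le> Re (sesq n B u u / \<alpha>)" using \<alpha>_pos by (subst \<alpha>_real) (simp add: Re_divide_of_real)
    then show ?thesis
      unfolding split using Suc.IH[OF psd_fn_schur_complement[OF Suc.prems False]] A'_def by simp
  qed
qed

section \<open>Density matrices\<close>

lemma density_parts:
  assumes "A \<in> density m"
  shows "A \<in> carrier_mat m m" "psd_fn m (entries A)" "(\<Sum>i<m. A $$ (i,i)) = 1"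
  using assms unfolding density_def psd_iff_psd_fn mtrace_def by auto

lemma convex_combination_density:
  assumes M: "M \<in> carrier_mat n n"
    and M_entries: "\<And>i j. i < n \<Longrightarrow> j < n \<Longrightarrow> M $$ (i,j) = (\<Sum>l<k. complex_of_real (ps l) * ss l $$ (i,j))"
    and parts: "\<And>l. l < k \<Longrightarrow> 0 \<le> ps l \<and> ss l \<in> density n"
    and weights: "(\<Sum>l<k. ps l) = 1"
  shows "M \<in> density n"
proof -
  have "hermitian n (entries M)"
    unfolding hermitian_def
  proof (intro allI impI)
    fix a b assume a: "a < n" and b: "b < n"
    have "\<And>l. l < k \<Longrightarrow> cnj (ss l $$ (a,b)) = ss l $$ (b,a)"
      using parts a b density_parts(2) unfolding psd_fn_def hermitian_def by blast
    then show "cnj (M $$ (a,b)) = M $$ (b,a)" using a b M_entries by (simp add: cnj_sum)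
  qed
  moreover have "0 \<le> Re (sesq n (entries M) v v)" for v
  proof -
    have "sesq n (entries M) v v = (\<Sum>i<n. \<Sum>j<n. \<Sum>l<k. complex_of_real (ps l) * (cnj (v i) * ss l $$ (i,j) * v j))"
      unfolding sesq_def by (intro sum.cong refl) (simp add: M_entries sum_distrib_left sum_distrib_right mult_ac)
    also have "\<dots> = (\<Sum>i<n. \<Sum>l<k. \<Sum>j<n. complex_of_real (ps l) * (cnj (v i) * ss l $$ (i,j) * v j))"
      by (rule sum.cong[OF refl], rule sum.swap)
    also have "\<dots> = (\<Sum>l<k. complex_of_real (ps l) * sesq n (entries (ss l)) v v)"
      unfolding sesq_def sum_distrib_left by (rule sum.swap)
    finally have "Re (sesq n (entries M) v v) = (\<Sum>l<k. ps l * Re (sesq n (entries (ss l)) v v))"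
      by simp
    also have "\<dots> \<ge> 0"
      using parts density_parts(2) unfolding psd_fn_def by (intro sum_nonneg) auto
    finally show ?thesis .
  qed
  moreover have "mtrace M = 1"
  proof -
    have "mtrace M = (\<Sum>i<n. \<Sum>l<k. complex_of_real (ps l) * ss l $$ (i,i))"
      unfolding mtrace_def using M M_entries by auto
    also have "\<dots> = (\<Sum>l<k. complex_of_real (ps l) * (\<Sum>i<n. ss l $$ (i,i)))"
      by (subst sum.swap) (simp add: sum_distrib_left)
    also have "\<dots> = (\<Sum>l<k. complex_of_real (ps l))"
      using parts density_parts(3) by (intro sum.cong refl) auto
    also have "\<dots> = 1" using weights by (metis of_real_1 of_real_sum)
    finally show ?thesis .
  qed
  ultimately show ?thesis unfolding density_def psd_iff_psd_fn psd_fn_def using M by auto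
qed

lemma mix_density:
  assumes "p \<in> {0..1}" "r1 \<in> density n" "r2 \<in> density n"
  shows "mix p r1 r2 \<in> density n"
proof -
  have r1: "r1 \<in> carrier_mat n n" and r2: "r2 \<in> carrier_mat n n" using assms density_parts by auto
  define ps where "ps = (\<lambda>l::nat. if l = 0 then p else 1 - p)"
  define ss where "ss = (\<lambda>l::nat. if l = 0 then r1 else r2)"
  show ?thesis
  proof (rule convex_combination_density[where k=2 and ps=ps and ss=ss])
    show "mix p r1 r2 \<in> carrier_mat n n" unfolding mix_def using r1 r2 by auto
    show "mix p r1 r2 $$ (i,j) = (\<Sum>l<2. complex_of_real (ps l) * ss l $$ (i,j))" if "i < n" "j < n" for i j
      unfolding mix_def ps_def ss_def using r1 r2 that by (simp add: numeral_2_eq_2)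
    show "0 \<le> ps l \<and> ss l \<in> density n" if "l < 2" for l
      using assms unfolding ps_def ss_def by auto
    show "(\<Sum>l<2. ps l) = 1" unfolding ps_def by (simp add: numeral_2_eq_2)
  qed
qed

lemma sum_product_index:
  fixes m n :: nat
  shows "(\<Sum>i<m*n. f i) = (\<Sum>a<m. \<Sum>k<n. (f (a*n+k) :: 'a::comm_monoid_add))"
proof -
  have "(\<Sum>i<m*n. f i) = (\<Sum>a<m. sum f {a*n..<a*n+n})" using sum.nat_group[of f n m] by simp
  also have "\<dots> = (\<Sum>a<m. \<Sum>k<n. f (a*n+k))"
  proof (rule sum.cong[OF refl])
    fix a
    have "sum f {0 + a*n..<n + a*n} = (\<Sum>k\<in>{0..<n}. f (k + a*n))" by (rule sum.shift_bounds_nat_ivl)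
    then show "sum f {a*n..<a*n+n} = (\<Sum>k<n. f (a*n+k))" by (simp add: atLeast0LessThan add.commute)
  qed
  finally show ?thesis .
qed

lemma product_index_decomp:
  fixes i m n :: nat
  assumes "i < m*n"
  obtains a k where "i = a*n+k" "a < m" "k < n"
proof
  have n: "n > 0" using assms by (cases n) auto
  show "i div n < m" using assms n by (simp add: div_less_iff_less_mult)
  show "i mod n < n" using n by simp
qed simp

lemma kron_index:
  assumes "A \<in> carrier_mat m m" "B \<in> carrier_mat n n" "a < m" "b < m" "k < n" "l < n"
  shows "kron A B $$ (a*n+k, b*n+l) = A $$ (a,b) * B $$ (k,l)"
proof -
  have "x*n+y < m*n" if "x < m" "y < n" for x y
  proof -
    have "x*n+y < (x+1)*n" using that by simp
    also have "\<dots> \<le> m*n" using that by (intro mult_le_mono1) simp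
    finally show ?thesis .
  qed
  then show ?thesis using assms unfolding kron_def by simp
qed

text \<open>The Kronecker product of density matrices is a density matrix; positivity is the
  key inequality with \<open>w\<^sub>a = (v\<^bsub>a n + k\<^esub>)\<^sub>k\<close>.\<close>
lemma kron_density:
  assumes A_dens: "A \<in> density m" and B_dens: "B \<in> density n"
  shows "kron A B \<in> density (m*n)"
proof -
  note A = density_parts[OF A_dens] and B = density_parts[OF B_dens]
  have K: "kron A B \<in> carrier_mat (m*n) (m*n)" using A(1) B(1) unfolding kron_def by auto
  have "hermitian (m*n) (entries (kron A B))"
    unfolding hermitian_def
  proof (intro allI impI)
    fix i j assume i: "i < m*n" and j: "j < m*n"
    obtain a k where ak: "i = a*n+k" "a < m" "k < n" using product_index_decomp[OF i] by blast
    obtain b l where bl: "j = b*n+l" "b < m" "l < n" using product_index_decomp[OF j] by blast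
    show "cnj (kron A B $$ (i,j)) = kron A B $$ (j,i)"
      using kron_index[OF A(1) B(1)] ak bl A(2) B(2) unfolding psd_fn_def hermitian_def by simp
  qed
  moreover have "0 \<le> Re (sesq (m*n) (entries (kron A B)) v v)" for v
  proof -
    define w where "w = (\<lambda>a k. v (a*n+k))"
    have "sesq (m*n) (entries (kron A B)) v v
      = (\<Sum>a<m. \<Sum>k<n. \<Sum>b<m. \<Sum>l<n. A $$ (a,b) * (cnj (w a k) * B $$ (k,l) * w b l))"
      unfolding sesq_def sum_product_index w_def
      by (intro sum.cong refl) (simp add: kron_index[OF A(1) B(1)] mult_ac)
    also have "\<dots> = (\<Sum>a<m. \<Sum>b<m. A $$ (a,b) * sesq n (entries B) (w a) (w b))"
      unfolding sesq_def sum_distrib_left by (rule sum.cong[OF refl], rule sum.swap)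
    finally show ?thesis using psd_fn_gram_sum_nonneg[OF A(2) B(2)] by simp
  qed
  moreover have "mtrace (kron A B) = 1"
  proof -
    have "mtrace (kron A B) = (\<Sum>a<m. \<Sum>k<n. kron A B $$ (a*n+k, a*n+k))"
      unfolding mtrace_def using K sum_product_index by auto
    also have "\<dots> = (\<Sum>a<m. \<Sum>k<n. A $$ (a,a) * B $$ (k,k))"
      by (intro sum.cong refl) (simp add: kron_index[OF A(1) B(1)])
    also have "\<dots> = (\<Sum>a<m. A $$ (a,a)) * (\<Sum>k<n. B $$ (k,k))" by (simp add: sum_product)
    finally show ?thesis using A(3) B(3) by simp
  qed
  ultimately show ?thesis unfolding density_def psd_iff_psd_fn psd_fn_def using K by auto
qed

lemma one_density: "1\<^sub>m 1 \<in> density 1"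
proof -
  have "0 \<le> Re (sesq 1 (entries (1\<^sub>m 1 :: complex mat)) v v)" for v
  proof -
    have "sesq 1 (entries (1\<^sub>m 1 :: complex mat)) v v = v 0 * cnj (v 0)" by (simp add: sesq_def)
    also have "\<dots> = of_real ((Re (v 0))\<^sup>2 + (Im (v 0))\<^sup>2)" by (rule complex_mult_cnj)
    finally show ?thesis by simp
  qed
  then show ?thesis unfolding density_def psd_iff_psd_fn psd_fn_def hermitian_def mtrace_def by auto
qed

lemma product_state_density: "s \<in> product_states ds \<Longrightarrow> s \<in> density (tdim ds)"
proof -
  have "length rs = length ds \<Longrightarrow> \<forall>i < length ds. rs ! i \<in> density (ds ! i)
     \<Longrightarrow> foldr kron rs (1\<^sub>m 1) \<in> density (prod_list ds)" for rs
  proof (induction ds arbitrary: rs)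
    case Nil
    then show ?case using one_density by simp
  next
    case (Cons d ds)
    then obtain r rs' where rs: "rs = r # rs'" by (cases rs) auto
    have "r \<in> density d" using Cons.prems rs by force
    moreover have "foldr kron rs' (1\<^sub>m 1) \<in> density (prod_list ds)"
      using Cons.IH[of rs'] Cons.prems rs by force
    ultimately show ?case using rs kron_density by simp
  qed
  then show "s \<in> product_states ds \<Longrightarrow> s \<in> density (tdim ds)"
    unfolding product_states_def tdim_def by blast
qed

lemma separable_density: "s \<in> separable_states ds \<Longrightarrow> s \<in> density (tdim ds)"
proof -
  assume "s \<in> separable_states ds"
  then obtain k :: nat and ps ss
    where s: "s = mat (tdim ds) (tdim ds) (\<lambda>(i, j). \<Sum>l<k. complex_of_real (ps l) * (ss l) $$ (i, j))"
      and parts: "\<forall>l<k. 0 \<le> ps l \<and> ss l \<in> product_states ds" and weights: "(\<Sum>l<k. ps l) = 1"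
    unfolding separable_states_def by blast
  show ?thesis
    by (rule convex_combination_density[where k=k and ps=ps and ss=ss])
      (use s parts weights product_state_density in auto)
qed

section \<open>Distance to a set along a segment\<close>

lemma metric_on_density_nonneg:
  assumes "metric_on_density n D" "x \<in> density n" "y \<in> density n"
  shows "0 \<le> D x y"
proof -
  have "D x x \<le> D x y + D y x" "D x x = 0" "D x y = D y x"
    using assms unfolding metric_on_density_def by blast+
  then show ?thesis by simp
qed

lemma inf_distance_on_segment:
  assumes metric: "metric_on_density n D" and convex: "convex_each_arg n D"
    and S: "S \<subseteq> density n" and \<rho>: "\<rho> \<in> density n" and \<sigma>: "\<sigma> \<in> S"
    and closest: "D \<rho> \<sigma> = Inf (D \<rho> ` S)" and p: "p \<in> {0..1}"
  shows "Inf (D (mix (1 - p) \<rho> \<sigma>) ` S) = (1 - p) * Inf (D \<rho> ` S)"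
proof -
  define \<tau> where "\<tau> = mix (1 - p) \<rho> \<sigma>"
  have q: "1 - p \<in> {0..1}" using p by auto
  have \<sigma>_dens: "\<sigma> \<in> density n" using S \<sigma> by auto
  have \<tau>_dens: "\<tau> \<in> density n" unfolding \<tau>_def using mix_density[OF q \<rho> \<sigma>_dens] .
  have zero: "D x x = 0" if "x \<in> density n" for x using metric that unfolding metric_on_density_def by blast
  have bdd: "bdd_below (D r ` S)" if "r \<in> density n" for r
    using metric_on_density_nonneg[OF metric that] S by (intro bdd_belowI[of _ 0]) auto
  have "D \<tau> \<sigma> \<le> (1 - p) * D \<rho> \<sigma> + (1 - (1 - p)) * D \<sigma> \<sigma>"
    using convex q \<rho> \<sigma>_dens unfolding convex_each_arg_def \<tau>_def by blast
  then have \<tau>_\<sigma>: "D \<tau> \<sigma> \<le> (1 - p) * D \<rho> \<sigma>" using zero[OF \<sigma>_dens] by simp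
  have "D \<rho> \<tau> \<le> (1 - p) * D \<rho> \<rho> + (1 - (1 - p)) * D \<rho> \<sigma>"
    using convex q \<rho> \<sigma>_dens unfolding convex_each_arg_def \<tau>_def by blast
  then have \<rho>_\<tau>: "D \<rho> \<tau> \<le> p * D \<rho> \<sigma>" using zero[OF \<rho>] by simp
  have "Inf (D \<tau> ` S) \<le> (1 - p) * Inf (D \<rho> ` S)"
  proof -
    have "Inf (D \<tau> ` S) \<le> D \<tau> \<sigma>" by (rule cInf_lower) (use \<sigma> bdd[OF \<tau>_dens] in auto)
    then show ?thesis using \<tau>_\<sigma> closest by simp
  qed
  moreover have "(1 - p) * Inf (D \<rho> ` S) \<le> Inf (D \<tau> ` S)"
  proof (rule cInf_greatest)
    show "D \<tau> ` S \<noteq> {}" using \<sigma> by auto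
    fix x assume "x \<in> D \<tau> ` S"
    then obtain s where s: "s \<in> S" and x: "x = D \<tau> s" by auto
    have "Inf (D \<rho> ` S) \<le> D \<rho> s" by (rule cInf_lower) (use s bdd[OF \<rho>] in auto)
    also have "\<dots> \<le> D \<rho> \<tau> + D \<tau> s"
      using metric \<rho> \<tau>_dens s S unfolding metric_on_density_def by blast
    finally show "(1 - p) * Inf (D \<rho> ` S) \<le> x" using \<rho>_\<tau> closest x by (simp add: algebra_simps)
  qed
  ultimately show ?thesis unfolding \<tau>_def by simp
qed

text \<open>Specialise to the separable states; the assumptions on the number of parties and
  contractivity are part of the setting but not needed for the argument.\<close>
theorem mainTheorem8:
  fixes ds :: "nat list" and D :: "complex mat \<Rightarrow> complex mat \<Rightarrow> real"
    and \<rho> \<sigma> :: "complex mat" and p :: real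
  assumes "2 \<le> length ds"
    and "metric_on_density (tdim ds) D"
    and "convex_each_arg (tdim ds) D"
    and "contractive (tdim ds) D"
    and "\<rho> \<in> density (tdim ds)"
    and "\<sigma> \<in> separable_states ds"
    and "D \<rho> \<sigma> = E_D ds D \<rho>"
    and "p \<in> {0..1}"
  shows "E_D ds D (mix (1 - p) \<rho> \<sigma>) = (1 - p) * E_D ds D \<rho>"
proof -
  have separable: "separable_states ds \<subseteq> density (tdim ds)" using separable_density by blast
  have closest: "D \<rho> \<sigma> = Inf (D \<rho> ` separable_states ds)" using assms(7) unfolding E_D_def by simp
  show ?thesis
    using inf_distance_on_segment[OF assms(2,3) separable assms(5,6) closest assms(8)]
    unfolding E_D_def by simp
qed

end
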